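(* Fix $n\ge 2$ and a dictator agent $t\in\{1,\dots,n\}$. Let $f$ be the mechanism that on a profile $\mathbf{x}=(x_1,\dots,x_n)$ sets $l_1=x_t$, $d_A=\max_{j:\,x_j\le x_t}(x_t-x_j)$, $d_B=\max_{j:\,x_j\ge x_t}(x_j-x_t)$, and $l_2=l_1+\max\{2d_A,d_B\}$ if $d_A\le d_B$, and $l_2=l_1-\max\{d_A,2d_B\}$ otherwise; it outputs $\{l_1,l_2\}$. Then for every profile $\mathbf{x}\in\mathbb{R}^n$, $SC(f,\mathbf{x})\le(n-1)\,OPT(\mathbf{x})$.
   Context: Two-facility game on a line: agent $j$ has location $x_j\in\mathbb{R}$. For facility locations $\{l_1,l_2\}$, an agent at $y$ has cost $\min\{|l_1-y|,|l_2-y|\}$. $SC(f,\mathbf{x})$ is the sum over all agents of their costs under $f(\mathbf{x})$, and $OPT(\mathbf{x})=\min_{l_1,l_2\in\mathbb{R}}\sum_j\min\{|l_1-x_j|,|l_2-x_j|\}$. *)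

theory Defs
  imports Complex_Main
begin

text \<open>Agents are indexed by 1..n; a profile is x :: nat => real (only x 1, ..., x n matter).
  A facility outcome {l1,l2} is represented by the pair (l1,l2).\<close>

definition agent_cost :: "real \<times> real \<Rightarrow> real \<Rightarrow> real" where
  "agent_cost L y = min \<bar>fst L - y\<bar> \<bar>snd L - y\<bar>"

definition SC :: "nat \<Rightarrow> (nat \<Rightarrow> real) \<Rightarrow> real \<times> real \<Rightarrow> real" where
  "SC n x L = (\<Sum>j\<in>{1..n}. agent_cost L (x j))"

definition OPT :: "nat \<Rightarrow> (nat \<Rightarrow> real) \<Rightarrow> real" where
  "OPT n x = (INF L\<in>(UNIV :: (real \<times> real) set). SC n x L)"

definition dA :: "nat \<Rightarrow> nat \<Rightarrow> (nat \<Rightarrow> real) \<Rightarrow> real" where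
  "dA n t x = Max {x t - x j | j. j \<in> {1..n} \<and> x j \<le> x t}"

definition dB :: "nat \<Rightarrow> nat \<Rightarrow> (nat \<Rightarrow> real) \<Rightarrow> real" where
  "dB n t x = Max {x j - x t | j. j \<in> {1..n} \<and> x j \<ge> x t}"

definition mech :: "nat \<Rightarrow> nat \<Rightarrow> (nat \<Rightarrow> real) \<Rightarrow> real \<times> real" where
  "mech n t x =
     (let l1 = x t; a = dA n t x; b = dB n t x
      in (l1, if a \<le> b then l1 + max (2 * a) b else l1 - max a (2 * b)))"

end

theory Submission
  imports Defs
begin

text \<open>The dictator pays nothing, so it suffices that every agent pays at most OPT. In every
  solution two of any three agents p \<le> q \<le> r share a facility, hence
  OPT \<ge> min (q - p) (r - q). Say d_A \<le> d_B, so that l2 lies to the right of x_t. The triple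
  (leftmost agent, dictator, rightmost agent) gives d_A \<le> OPT, which settles every agent left
  of x_t. An agent at x_t + s to the right is charged to the triple (dictator, agent, rightmost
  agent) if 2 d_A \<le> d_B, since then l2 is the rightmost position; to the triple (leftmost agent,
  dictator, agent) if s \<le> d_A; and otherwise it lies within d_A of l2 = x_t + 2 d_A. The case
  d_A > d_B is the mirror image under x \<mapsto> -x.\<close>

definition min_gap_bound :: "nat set \<Rightarrow> (nat \<Rightarrow> real) \<Rightarrow> real \<Rightarrow> bool" where
  "min_gap_bound I x c \<longleftrightarrow>
     (\<forall>i\<in>I. \<forall>j\<in>I. \<forall>k\<in>I. x i \<le> x j \<longrightarrow> x j \<le> x k \<longrightarrow> min (x j - x i) (x k - x j) \<le> c)"

lemma min_gap_bound_uminus: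
  assumes "min_gap_bound I x c"
  shows "min_gap_bound I (\<lambda>m. - x m) c"
  unfolding min_gap_bound_def
proof (intro ballI impI)
  fix i j k assume "i \<in> I" "j \<in> I" "k \<in> I" "- x i \<le> - x j" "- x j \<le> - x k"
  then have "min (x j - x k) (x i - x j) \<le> c"
    using assms unfolding min_gap_bound_def by simp
  then show "min (- x j - - x i) (- x k - - x j) \<le> c"
    by (simp add: min.commute)
qed

lemma agent_cost_nonneg: "agent_cost L y \<ge> 0"
  by (simp add: agent_cost_def)

lemma agent_cost_attained: "\<exists>l\<in>{fst L, snd L}. agent_cost L y = \<bar>l - y\<bar>"
  unfolding agent_cost_def by (simp add: min_def)

lemma min_gap_le_agent_cost_sum:
  fixes p q r :: real
  assumes "p \<le> q" "q \<le> r"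
  shows "min (q - p) (r - q) \<le> agent_cost L p + agent_cost L q + agent_cost L r"
proof -
  obtain lp lq lr where l: "lp \<in> {fst L, snd L}" "lq \<in> {fst L, snd L}" "lr \<in> {fst L, snd L}"
    and cost: "agent_cost L p = \<bar>lp - p\<bar>" "agent_cost L q = \<bar>lq - q\<bar>" "agent_cost L r = \<bar>lr - r\<bar>"
    by (meson agent_cost_attained)
  have "lp = lq \<or> lq = lr \<or> lp = lr"
    using l by auto
  then show ?thesis
    using assms cost agent_cost_nonneg[of L] by (elim disjE) (auto simp: abs_if)
qed

lemma SC_nonneg: "SC n x L \<ge> 0"
  unfolding SC_def by (rule sum_nonneg) (simp add: agent_cost_nonneg)

lemma OPT_nonneg: "OPT n x \<ge> 0"
  unfolding OPT_def by (rule cINF_greatest) (auto simp: SC_nonneg)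

lemma min_gap_bound_OPT: "min_gap_bound {1..n} x (OPT n x)"
  unfolding min_gap_bound_def
proof (intro ballI impI)
  fix i j k
  assume ijk: "i \<in> {1..n}" "j \<in> {1..n}" "k \<in> {1..n}" and ord: "x i \<le> x j" "x j \<le> x k"
  show "min (x j - x i) (x k - x j) \<le> OPT n x"
  proof (cases "i = j \<or> j = k \<or> i = k")
    case True
    then have "min (x j - x i) (x k - x j) \<le> 0" using ord by auto
    then show ?thesis using OPT_nonneg order_trans by blast
  next
    case False
    show ?thesis
      unfolding OPT_def
    proof (rule cINF_greatest)
      fix L :: "real \<times> real"
      have "min (x j - x i) (x k - x j) \<le> (\<Sum>m\<in>{i,j,k}. agent_cost L (x m))"
        using min_gap_le_agent_cost_sum[OF ord, of L] False by (simp add: add.assoc)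
      also have "\<dots> \<le> SC n x L"
        unfolding SC_def using ijk by (intro sum_mono2) (auto simp: agent_cost_nonneg)
      finally show "min (x j - x i) (x k - x j) \<le> SC n x L" .
    qed simp
  qed
qed

lemma dA_attained: "t \<in> {1..n} \<Longrightarrow> \<exists>j\<in>{1..n}. x j = x t - dA n t x"
  using Max_in[of "{x t - x j | j. j \<in> {1..n} \<and> x j \<le> x t}"] unfolding dA_def by force

lemma dB_attained: "t \<in> {1..n} \<Longrightarrow> \<exists>j\<in>{1..n}. x j = x t + dB n t x"
  using Max_in[of "{x j - x t | j. j \<in> {1..n} \<and> x j \<ge> x t}"] unfolding dB_def by force

lemma le_dA: "j \<in> {1..n} \<Longrightarrow> x j \<le> x t \<Longrightarrow> x t - x j \<le> dA n t x"
  unfolding dA_def by (rule Max_ge) auto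

lemma le_dB: "j \<in> {1..n} \<Longrightarrow> x t \<le> x j \<Longrightarrow> x j - x t \<le> dB n t x"
  unfolding dB_def by (rule Max_ge) auto

lemma dA_dB_span:
  assumes "t \<in> {1..n}" "j \<in> {1..n}"
  shows "x t - dA n t x \<le> x j \<and> x j \<le> x t + dB n t x"
proof -
  have "0 \<le> dA n t x" "0 \<le> dB n t x"
    using le_dA[of t n x t] le_dB[of t n x t] assms(1) by auto
  then show ?thesis
    using le_dA[of j n x t] le_dB[of j n x t] assms(2) by (cases "x j \<le> x t") auto
qed

lemma dist_to_facilities_le_min_gap_bound:
  fixes a b c :: real
  assumes gap: "min_gap_bound I x c" and t: "t \<in> I" and j: "j \<in> I"
    and left: "jL \<in> I" "x jL = x t - a" and right: "jR \<in> I" "x jR = x t + b"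
    and span: "\<forall>m\<in>I. x t - a \<le> x m \<and> x m \<le> x t + b" and "a \<le> b"
  shows "min \<bar>x t - x j\<bar> \<bar>x t + max (2 * a) b - x j\<bar> \<le> c"
proof -
  have gap_le: "\<And>i j k. i \<in> I \<Longrightarrow> j \<in> I \<Longrightarrow> k \<in> I \<Longrightarrow> x i \<le> x j \<Longrightarrow> x j \<le> x k
      \<Longrightarrow> min (x j - x i) (x k - x j) \<le> c"
    using gap unfolding min_gap_bound_def by blast
  have "a \<ge> 0" and xj: "x t - a \<le> x j" "x j \<le> x t + b"
    using span t j by auto
  have a_le: "a \<le> c"
    using gap_le[OF left(1) t right(1)] left right \<open>a \<ge> 0\<close> \<open>a \<le> b\<close> by simp
  consider "x j \<le> x t" | "x t < x j" "2 * a \<le> b" | "x t < x j" "x j \<le> x t + a"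
    | "x t + a < x j" "b < 2 * a"
    by linarith
  then show ?thesis
  proof cases
    case 1
    then show ?thesis using a_le xj by simp
  next
    case 2
    then show ?thesis using gap_le[OF t j right(1)] right xj by (simp add: max_def)
  next
    case 3
    then show ?thesis using gap_le[OF left(1) t j] left by simp
  next
    case 4
    then show ?thesis using a_le xj by (simp add: max_def)
  qed
qed

lemma agent_cost_mech_le:
  assumes gap: "min_gap_bound {1..n} x c" and t: "t \<in> {1..n}" and j: "j \<in> {1..n}"
  shows "agent_cost (mech n t x) (x j) \<le> c"
proof -
  define a b where "a = dA n t x" and "b = dB n t x"
  obtain jL jR where left: "jL \<in> {1..n}" "x jL = x t - a" and right: "jR \<in> {1..n}" "x jR = x t + b"
    using dA_attained[OF t] dB_attained[OF t] unfolding a_def b_def by blast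
  have span: "\<forall>m\<in>{1..n}. x t - a \<le> x m \<and> x m \<le> x t + b"
    using dA_dB_span[OF t] unfolding a_def b_def by blast
  show ?thesis
  proof (cases "a \<le> b")
    case True
    then show ?thesis
      using dist_to_facilities_le_min_gap_bound[OF gap t j left right span True]
      unfolding agent_cost_def mech_def Let_def a_def b_def by simp
  next
    case False
    have "\<forall>m\<in>{1..n}. - x t - b \<le> - x m \<and> - x m \<le> - x t + a"
      using span by auto
    then have "min \<bar>- x t + x j\<bar> \<bar>- x t + max (2 * b) a + x j\<bar> \<le> c"
      using dist_to_facilities_le_min_gap_bound[OF min_gap_bound_uminus[OF gap] t j, of jR b jL a]
        left right False by simp
    then show ?thesis
      using False unfolding agent_cost_def mech_def Let_def a_def[symmetric] b_def[symmetric]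
      by (simp add: max.commute abs_minus_commute algebra_simps)
  qed
qed

theorem mainTheorem9:
  fixes n t :: nat and x :: "nat \<Rightarrow> real"
  assumes "n \<ge> 2" and "t \<in> {1..n}"
  shows "SC n x (mech n t x) \<le> (real n - 1) * OPT n x"
proof -
  have "SC n x (mech n t x)
      = agent_cost (mech n t x) (x t) + (\<Sum>j\<in>{1..n} - {t}. agent_cost (mech n t x) (x j))"
    unfolding SC_def using assms(2) by (simp add: sum.remove)
  also have "agent_cost (mech n t x) (x t) = 0"
    unfolding agent_cost_def mech_def Let_def by simp
  also have "(\<Sum>j\<in>{1..n} - {t}. agent_cost (mech n t x) (x j)) \<le> (\<Sum>j\<in>{1..n} - {t}. OPT n x)"
    using agent_cost_mech_le[OF min_gap_bound_OPT assms(2)] by (intro sum_mono) auto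
  also have "\<dots> = (real n - 1) * OPT n x"
    using assms by (simp add: of_nat_diff)
  finally show ?thesis by simp
qed

end
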